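(* Let $(A=A_0\oplus A_1,\cdot,\alpha)$ be a super anticommutative Hom-superalgebra. Then for all homogeneous $w,x,y,z\in A$: (i) $\tilde{J}_A$ is super skew-symmetric: $\tilde{J}_A(x,y,z)=-(-1)^{\bar{x}\bar{y}}\tilde{J}_A(y,x,z)=-(-1)^{\bar{y}\bar{z}}\tilde{J}_A(x,z,y)=-(-1)^{\bar{x}(\bar{y}+\bar{z})+\bar{y}\bar{z}}\tilde{J}_A(z,y,x)$; (ii) \begin{align*} &\alpha^2(w)\tilde{J}_A(x,y,z)-(-1)^{\bar{w}(\bar{x}+\bar{y}+\bar{z})}\alpha^2(x)\tilde{J}_A(y,z,w)+(-1)^{(\bar{y}+\bar{z})(\bar{w}+\bar{x})}\alpha^2(y)\tilde{J}_A(z,w,x)-(-1)^{\bar{z}(\bar{x}+\bar{y}+\bar{w})}\alpha^2(z)\tilde{J}_A(w,x,y)\\ &=\tilde{J}_A(wx,\alpha(y),\alpha(z))+(-1)^{(\bar{y}+\bar{z})(\bar{x}+\bar{w})}\tilde{J}_A(yz,\alpha(w),\alpha(x))+(-1)^{\bar{x}(\bar{y}+\bar{z})}\tilde{J}_A(wy,\alpha(z),\alpha(x))\\ &\quad+(-1)^{\bar{z}(\bar{x}+\bar{y})+\bar{w}(\bar{x}+\bar{z})}\tilde{J}_A(zx,\alpha(w),\alpha(y))-(-1)^{\bar{z}(\bar{x}+\bar{y}+\bar{w})}\tilde{J}_A(zw,\alpha(x),\alpha(y))-(-1)^{\bar{w}(\bar{x}+\bar{y}+\bar{z})}\tilde{J}_A(xy,\alpha(z),\alpha(w)).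 \end{align*}
   Context: $\mathbb{K}$ is an algebraically closed field of characteristic $0$. A superspace is a $\mathbb{Z}_2$-graded vector space $A=A_0\oplus A_1$; the parity of a homogeneous $x$ is written $\bar{x}$. A Hom-superalgebra $(A,\cdot,\alpha)$ consists of a superspace $A$, an even bilinear product $(x,y)\mapsto xy$, and an even linear map $\alpha$ with $\alpha(xy)=\alpha(x)\alpha(y)$. It is super anticommutative if $xy=-(-1)^{\bar{x}\bar{y}}yx$ for homogeneous $x,y$. The Hom-super-Jacobian is $\tilde{J}_A(x,y,z)=(xy)\alpha(z)+(-1)^{\bar{x}(\bar{y}+\bar{z})}(yz)\alpha(x)+(-1)^{\bar{z}(\bar{x}+\bar{y})}(zx)\alpha(y)$. *)

theory Defs
  imports "HOL-Computational_Algebra.Polynomial"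
begin

text \<open>Superspace A = A0 \<oplus> A1 over a field, with scalar multiplication sc.
  Parities are natural numbers; only their residue mod 2 matters.\<close>

definition superspace :: "('k::field \<Rightarrow> 'v::ab_group_add \<Rightarrow> 'v) \<Rightarrow> 'v set \<Rightarrow> 'v set \<Rightarrow> bool" where
  "superspace sc A0 A1 \<longleftrightarrow> vector_space sc \<and> module.subspace sc A0 \<and> module.subspace sc A1
     \<and> A0 \<inter> A1 = {0} \<and> (\<forall>v. \<exists>a\<in>A0. \<exists>b\<in>A1. v = a + b)"

definition grade :: "'v set \<Rightarrow> 'v set \<Rightarrow> nat \<Rightarrow> 'v set" where
  "grade A0 A1 p = (if even p then A0 else A1)"

definition sgnv :: "nat \<Rightarrow> 'v::ab_group_add \<Rightarrow> 'v" where
  "sgnv n v = (if even n then v else - v)"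

definition hom_superalgebra ::
  "('k::field \<Rightarrow> 'v::ab_group_add \<Rightarrow> 'v) \<Rightarrow> 'v set \<Rightarrow> 'v set \<Rightarrow> ('v \<Rightarrow> 'v \<Rightarrow> 'v) \<Rightarrow> ('v \<Rightarrow> 'v) \<Rightarrow> bool" where
  "hom_superalgebra sc A0 A1 mul \<alpha> \<longleftrightarrow>
     superspace sc A0 A1
     \<and> (\<forall>x. Vector_Spaces.linear sc sc (mul x))
     \<and> (\<forall>y. Vector_Spaces.linear sc sc (\<lambda>x. mul x y))
     \<and> (\<forall>p q x y. x \<in> grade A0 A1 p \<longrightarrow> y \<in> grade A0 A1 q \<longrightarrow> mul x y \<in> grade A0 A1 (p + q))
     \<and> Vector_Spaces.linear sc sc \<alpha>
     \<and> (\<forall>p x. x \<in> grade A0 A1 p \<longrightarrow> \<alpha> x \<in> grade A0 A1 p)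
     \<and> (\<forall>x y. \<alpha> (mul x y) = mul (\<alpha> x) (\<alpha> y))"

definition super_anticommutative ::
  "'v set \<Rightarrow> 'v set \<Rightarrow> ('v::ab_group_add \<Rightarrow> 'v \<Rightarrow> 'v) \<Rightarrow> bool" where
  "super_anticommutative A0 A1 mul \<longleftrightarrow>
     (\<forall>p q x y. x \<in> grade A0 A1 p \<longrightarrow> y \<in> grade A0 A1 q \<longrightarrow>
        mul x y = - sgnv (p * q) (mul y x))"

definition hom_super_jacobian ::
  "('v::ab_group_add \<Rightarrow> 'v \<Rightarrow> 'v) \<Rightarrow> ('v \<Rightarrow> 'v) \<Rightarrow> 'v \<Rightarrow> nat \<Rightarrow> 'v \<Rightarrow> nat \<Rightarrow> 'v \<Rightarrow> nat \<Rightarrow> 'v" where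
  "hom_super_jacobian mul \<alpha> x px y py z pz =
     mul (mul x y) (\<alpha> z)
     + sgnv (px * (py + pz)) (mul (mul y z) (\<alpha> x))
     + sgnv (pz * (px + py)) (mul (mul z x) (\<alpha> y))"

end

theory Submission
  imports Defs
begin

text \<open>Both identities are consequences of bilinearity, multiplicativity of \<open>\<alpha>\<close> and super
  anticommutativity alone. The Jacobian is cyclically invariant up to the Koszul sign for any
  product, and super anticommutativity turns this into full super skew-symmetry. For the
  four-term identity, expanding \<open>\<tilde>J\<^sub>A(ab, \<alpha>c, \<alpha>d)\<close> gives two terms of the shape
  \<open>((ab)\<alpha>(c))\<alpha>\<^sup>2(d)\<close> and one of the shape \<open>(\<alpha>(c)\<alpha>(d))(\<alpha>(a)\<alpha>(b))\<close>; the latter cancel in pairs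
  on the right-hand side, and after moving \<open>\<alpha>\<^sup>2(w)\<close> to the right on the left-hand side the
  twelve remaining terms of each side agree up to one more application of anticommutativity.\<close>

lemma sgnv_add: "sgnv n (a + b) = sgnv n a + sgnv n b"
  and sgnv_diff: "sgnv n (a - b) = sgnv n a - sgnv n b"
  and sgnv_minus: "sgnv n (- a) = - sgnv n a"
  and sgnv_sgnv: "sgnv m (sgnv n a) = sgnv (m + n) a"
  by (auto simp: sgnv_def)

lemma hom_super_jacobian_cyclic:
  "hom_super_jacobian mul \<alpha> x px y py z pz
     = sgnv (px * (py + pz)) (hom_super_jacobian mul \<alpha> y py z pz x px)"
  by (auto simp: hom_super_jacobian_def sgnv_def algebra_simps)

locale super_anticommutative_hom_algebra =
  fixes A0 A1 :: "'v::ab_group_add set" and mul :: "'v \<Rightarrow> 'v \<Rightarrow> 'v" and \<alpha> :: "'v \<Rightarrow> 'v"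
  assumes additive_mul_left: "additive (\<lambda>a. mul a b)"
    and additive_mul_right: "additive (mul a)"
    and additive_alpha: "additive \<alpha>"
    and alpha_mul: "\<alpha> (mul a b) = mul (\<alpha> a) (\<alpha> b)"
    and mul_grade: "a \<in> grade A0 A1 p \<Longrightarrow> b \<in> grade A0 A1 q \<Longrightarrow> mul a b \<in> grade A0 A1 (p + q)"
    and alpha_grade: "a \<in> grade A0 A1 p \<Longrightarrow> \<alpha> a \<in> grade A0 A1 p"
    and mul_anticommute:
      "a \<in> grade A0 A1 p \<Longrightarrow> b \<in> grade A0 A1 q \<Longrightarrow> mul a b = - sgnv (p * q) (mul b a)"
begin

abbreviation "Jac \<equiv> hom_super_jacobian mul \<alpha>"

lemma mul_add_left: "mul (a + b) c = mul a c + mul b c"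
  and mul_diff_left: "mul (a - b) c = mul a c - mul b c"
  and mul_minus_left: "mul (- a) c = - mul a c"
  and mul_add_right: "mul c (a + b) = mul c a + mul c b"
  and mul_diff_right: "mul c (a - b) = mul c a - mul c b"
  and mul_minus_right: "mul c (- a) = - mul c a"
  and alpha_add: "\<alpha> (a + b) = \<alpha> a + \<alpha> b"
  and alpha_diff: "\<alpha> (a - b) = \<alpha> a - \<alpha> b"
  and alpha_minus: "\<alpha> (- a) = - \<alpha> a"
  using additive.add[OF additive_mul_left] additive.diff[OF additive_mul_left]
    additive.minus[OF additive_mul_left] additive.add[OF additive_mul_right]
    additive.diff[OF additive_mul_right] additive.minus[OF additive_mul_right]
    additive.add[OF additive_alpha] additive.diff[OF additive_alpha]
    additive.minus[OF additive_alpha]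
  by simp_all

lemmas mul_linear_simps =
  mul_add_left mul_diff_left mul_minus_left mul_add_right mul_diff_right mul_minus_right
  alpha_add alpha_diff alpha_minus

lemma mul_sgnv_left: "mul (sgnv n a) b = sgnv n (mul a b)"
  and mul_sgnv_right: "mul a (sgnv n b) = sgnv n (mul a b)"
  and alpha_sgnv: "\<alpha> (sgnv n a) = sgnv n (\<alpha> a)"
  by (simp_all add: sgnv_def mul_linear_simps)

lemmas expand_simps = mul_linear_simps mul_sgnv_left mul_sgnv_right alpha_sgnv
  sgnv_add sgnv_diff sgnv_minus sgnv_sgnv

lemma jacobian_swap12:
  assumes "x \<in> grade A0 A1 px" "y \<in> grade A0 A1 py" "z \<in> grade A0 A1 pz"
  shows "Jac x px y py z pz = - sgnv (px * py) (Jac y py x px z pz)"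
  unfolding hom_super_jacobian_def
  by (simp only: mul_anticommute[OF assms(2,1)] mul_anticommute[OF assms(1,3)]
      mul_anticommute[OF assms(3,2)] expand_simps)
    (auto simp: sgnv_def algebra_simps)

lemma jacobian_swap23:
  assumes "x \<in> grade A0 A1 px" "y \<in> grade A0 A1 py" "z \<in> grade A0 A1 pz"
  shows "Jac x px y py z pz = - sgnv (py * pz) (Jac x px z pz y py)"
  using hom_super_jacobian_cyclic[of mul \<alpha> x px] hom_super_jacobian_cyclic[of mul \<alpha> x px z pz y py]
    jacobian_swap12[OF assms(2,3,1)]
  by (auto simp: sgnv_def algebra_simps)

lemma jacobian_swap13:
  assumes "x \<in> grade A0 A1 px" "y \<in> grade A0 A1 py" "z \<in> grade A0 A1 pz"
  shows "Jac x px y py z pz = - sgnv (px * (py + pz) + py * pz) (Jac z pz y py x px)"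
  using hom_super_jacobian_cyclic[of mul \<alpha> x px] jacobian_swap12[OF assms(2,3,1)]
  by (auto simp: sgnv_def)

lemma jacobian_mul_alpha:
  assumes "a \<in> grade A0 A1 pa" "b \<in> grade A0 A1 pb" "c \<in> grade A0 A1 pc" "d \<in> grade A0 A1 pd"
  shows "Jac (mul a b) (pa + pb) (\<alpha> c) pc (\<alpha> d) pd
    = mul (mul (mul a b) (\<alpha> c)) (\<alpha> (\<alpha> d))
      - sgnv (pc * pd) (mul (mul (mul a b) (\<alpha> d)) (\<alpha> (\<alpha> c)))
      + sgnv ((pa + pb) * (pc + pd)) (mul (mul (\<alpha> c) (\<alpha> d)) (mul (\<alpha> a) (\<alpha> b)))"
  unfolding hom_super_jacobian_def
  by (simp only: alpha_mul mul_anticommute[OF alpha_grade[OF assms(4)] mul_grade[OF assms(1,2)]]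
      expand_simps) (auto simp: sgnv_def algebra_simps)

lemma alpha2_mul_jacobian:
  assumes "w \<in> grade A0 A1 pw" "x \<in> grade A0 A1 px" "y \<in> grade A0 A1 py" "z \<in> grade A0 A1 pz"
  shows "mul (\<alpha> (\<alpha> w)) (Jac x px y py z pz)
    = - sgnv (pw * (px + py + pz)) (mul (Jac x px y py z pz) (\<alpha> (\<alpha> w)))"
proof -
  have swap: "mul (\<alpha> (\<alpha> w)) (mul (mul a b) (\<alpha> c))
      = - sgnv (pw * (pa + pb + pc)) (mul (mul (mul a b) (\<alpha> c)) (\<alpha> (\<alpha> w)))"
    if "a \<in> grade A0 A1 pa" "b \<in> grade A0 A1 pb" "c \<in> grade A0 A1 pc" for a b c pa pb pc
    using mul_anticommute[OF alpha_grade[OF alpha_grade[OF assms(1)]]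
        mul_grade[OF mul_grade[OF that(1,2)] alpha_grade[OF that(3)]]] .
  show ?thesis
    unfolding hom_super_jacobian_def
    by (simp add: swap[OF assms(2,3,4)] swap[OF assms(3,4,2)] swap[OF assms(4,2,3)]
        expand_simps add_ac)
qed

lemma mul_swap_inner:
  assumes "a \<in> grade A0 A1 p" "b \<in> grade A0 A1 q"
  shows "mul (mul (mul a b) c) d = - sgnv (p * q) (mul (mul (mul b a) c) d)"
  by (simp add: mul_anticommute[OF assms] expand_simps)


lemma jacobian_four_term_identity:
  assumes w: "w \<in> grade A0 A1 pw" and x: "x \<in> grade A0 A1 px"
    and y: "y \<in> grade A0 A1 py" and z: "z \<in> grade A0 A1 pz"
  shows "mul (\<alpha> (\<alpha> w)) (Jac x px y py z pz)
         - sgnv (pw * (px + py + pz)) (mul (\<alpha> (\<alpha> x)) (Jac y py z pz w pw))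
         + sgnv ((py + pz) * (pw + px)) (mul (\<alpha> (\<alpha> y)) (Jac z pz w pw x px))
         - sgnv (pz * (px + py + pw)) (mul (\<alpha> (\<alpha> z)) (Jac w pw x px y py))
       = Jac (mul w x) (pw + px) (\<alpha> y) py (\<alpha> z) pz
         + sgnv ((py + pz) * (px + pw)) (Jac (mul y z) (py + pz) (\<alpha> w) pw (\<alpha> x) px)
         + sgnv (px * (py + pz)) (Jac (mul w y) (pw + py) (\<alpha> z) pz (\<alpha> x) px)
         + sgnv (pz * (px + py) + pw * (px + pz)) (Jac (mul z x) (pz + px) (\<alpha> w) pw (\<alpha> y) py)
         - sgnv (pz * (px + py + pw)) (Jac (mul z w) (pz + pw) (\<alpha> x) px (\<alpha> y) py)
         - sgnv (pw * (px + py + pz)) (Jac (mul x y) (px + py) (\<alpha> z) pz (\<alpha> w) pw)"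
  apply (simp only: alpha2_mul_jacobian[OF w x y z] alpha2_mul_jacobian[OF x y z w]
      alpha2_mul_jacobian[OF y z w x] alpha2_mul_jacobian[OF z w x y]
      jacobian_mul_alpha[OF w x y z] jacobian_mul_alpha[OF y z w x] jacobian_mul_alpha[OF w y z x]
      jacobian_mul_alpha[OF z x w y] jacobian_mul_alpha[OF z w x y] jacobian_mul_alpha[OF x y z w])
  apply (simp only: hom_super_jacobian_def expand_simps mul_swap_inner[OF x z] mul_swap_inner[OF y w]
      mul_anticommute[OF mul_grade[OF alpha_grade[OF w] alpha_grade[OF x]]
        mul_grade[OF alpha_grade[OF y] alpha_grade[OF z]]]
      mul_anticommute[OF mul_grade[OF alpha_grade[OF w] alpha_grade[OF y]]
        mul_grade[OF alpha_grade[OF z] alpha_grade[OF x]]]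
      mul_anticommute[OF mul_grade[OF alpha_grade[OF z] alpha_grade[OF w]]
        mul_grade[OF alpha_grade[OF x] alpha_grade[OF y]]])
  by (cases "even pw"; cases "even px"; cases "even py"; cases "even pz";
      simp add: sgnv_def algebra_simps)

end

lemma super_anticommutative_hom_algebraI:
  assumes "hom_superalgebra sc A0 A1 mul \<alpha>" and "super_anticommutative A0 A1 mul"
  shows "super_anticommutative_hom_algebra A0 A1 mul \<alpha>"
proof -
  have additive_linear: "additive f" if "Vector_Spaces.linear sc sc f" for f
    using module_hom.add[OF that[unfolded linear_iff_module_hom]] by (rule additive.intro)
  from assms show ?thesis
    unfolding hom_superalgebra_def super_anticommutative_def
    by (intro super_anticommutative_hom_algebra.intro additive_linear) (elim conjE; blast)+
qed
theorem lemma2p5: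
  fixes sc :: "'k::{alg_closed_field, field_char_0} \<Rightarrow> 'v::ab_group_add \<Rightarrow> 'v"
    and A0 A1 :: "'v set" and mul :: "'v \<Rightarrow> 'v \<Rightarrow> 'v" and \<alpha> :: "'v \<Rightarrow> 'v"
    and w x y z :: 'v and pw px py pz :: nat
  assumes "hom_superalgebra sc A0 A1 mul \<alpha>"
    and "super_anticommutative A0 A1 mul"
    and "pw < 2" "px < 2" "py < 2" "pz < 2"
    and "w \<in> grade A0 A1 pw" "x \<in> grade A0 A1 px"
    and "y \<in> grade A0 A1 py" "z \<in> grade A0 A1 pz"
  defines "J \<equiv> hom_super_jacobian mul \<alpha>"
  shows "(J x px y py z pz = - sgnv (px * py) (J y py x px z pz)
       \<and> J x px y py z pz = - sgnv (py * pz) (J x px z pz y py)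
       \<and> J x px y py z pz = - sgnv (px * (py + pz) + py * pz) (J z pz y py x px))
     \<and> (mul (\<alpha> (\<alpha> w)) (J x px y py z pz)
         - sgnv (pw * (px + py + pz)) (mul (\<alpha> (\<alpha> x)) (J y py z pz w pw))
         + sgnv ((py + pz) * (pw + px)) (mul (\<alpha> (\<alpha> y)) (J z pz w pw x px))
         - sgnv (pz * (px + py + pw)) (mul (\<alpha> (\<alpha> z)) (J w pw x px y py))
       = J (mul w x) (pw + px) (\<alpha> y) py (\<alpha> z) pz
         + sgnv ((py + pz) * (px + pw)) (J (mul y z) (py + pz) (\<alpha> w) pw (\<alpha> x) px)
         + sgnv (px * (py + pz)) (J (mul w y) (pw + py) (\<alpha> z) pz (\<alpha> x) px)
         + sgnv (pz * (px + py) + pw * (px + pz)) (J (mul z x) (pz + px) (\<alpha> w) pw (\<alpha> y) py)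
         - sgnv (pz * (px + py + pw)) (J (mul z w) (pz + pw) (\<alpha> x) px (\<alpha> y) py)
         - sgnv (pw * (px + py + pz)) (J (mul x y) (px + py) (\<alpha> z) pz (\<alpha> w) pw))"
proof -
  interpret super_anticommutative_hom_algebra A0 A1 mul \<alpha>
    using assms(1,2) by (rule super_anticommutative_hom_algebraI)
  show ?thesis
    unfolding J_def
    using jacobian_swap12[OF assms(8,9,10)] jacobian_swap23[OF assms(8,9,10)]
      jacobian_swap13[OF assms(8,9,10)] jacobian_four_term_identity[OF assms(7-10)]
    by (intro conjI)
qed

end
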